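(* Let $R$ be a unital ring and $E$ a directed graph which is not the null graph. Let $S=M(\mathbb{Z},I)\cup\{0\}$ and let $w$ be a canonical weight mapping on $E$; view $L_R(E)$ as a canonically $S$-graded ring. If $(L_R(E))_e$ is a von Neumann regular ring for every nonzero idempotent $e\in S$, then $R$ is von Neumann regular.
   Context: Directed graph $E=(E^0,E^1,\mathrm{r},\mathrm{s})$; not null means $E^0\ne\emptyset$; paths $E^*$ (vertices as length-$0$ paths); $\mathrm{Reg}(E)$ = vertices $v$ with $\mathrm{s}^{-1}(v)$ nonempty finite. $L_R(E)$ is the $R$-algebra generated by $E^0$, $E^1$, $\{\alpha^*\}$ ($R$ commuting with generators) with relations $vv'=\delta_{v,v'}v$; $\mathrm{s}(\alpha)\alpha=\alpha\mathrm{r}(\alpha)=\alpha$, $\mathrm{r}(\alpha)\alpha^*=\alpha^*\mathrm{s}(\alpha)=\alpha^*$; $\alpha^*\alpha'=\delta_{\alpha,\alpha'}\mathrm{r}(\alpha)$; $\sum_{\mathrm{s}(\alpha)=v}\alpha\alpha^*=v$ for $v\in\mathrm{Reg}(E)$. $M(\mathbb{Z},I)=I\times\mathbb{Z}\times I$, $(i,a,j)(k,b,l)=(i,a+b,l)$ if $j=k$, else undefined; $S=M(\mathbb{Z},I)\cup\{0\}$, undefined products $0$, $0$ absorbing; $(i,a,j)^{-1}=(j,-a,i)$. Canonical weight mapping: vertices get weights $(i,0,i)$, edges $(i,1,j)$, $w(\alpha^* )=w(\alpha)^{-1}$, $w(\mathrm{s}(\alpha))w(\alpha)=w(\alpha)=w(\alpha)w(\mathrm{r}(\alpha))$;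 for each nonzero idempotent $f$, edges with source of weight $f$ share a weight and edges with range of weight $f$ share a weight; extended multiplicatively with $w(\mu\eta^* )=w(\mu)w(\eta)^{-1}$. $(L_R(E))_s$ = $R$-span of $\mu\eta^*$, $\mathrm{r}(\mu)=\mathrm{r}(\eta)$, $w(\mu\eta^* )=s$. *)

theory Defs
  imports Main
begin

datatype ('v,'e) gen = V 'v | Ed 'e | Gh 'e

text \<open>The semigroup S = M(Z,I) \<union> {0}: None is 0, Some (i,a,j) is (i,a,j).\<close>
type_synonym 'i S = "('i \<times> int \<times> 'i) option"

fun smult :: "'i S \<Rightarrow> 'i S \<Rightarrow> 'i S" where
  "smult (Some (i,a,j)) (Some (k,b,l)) = (if j = k then Some (i, a + b, l) else None)"
| "smult _ _ = None"

fun sinv :: "'i S \<Rightarrow> 'i S" where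
  "sinv (Some (i,a,j)) = Some (j, -a, i)"
| "sinv None = None"

text \<open>Free R-algebra on the generators (R commuting with generators):
  finitely supported functions from words to R, with convolution product.\<close>
definition valid_gen :: "'v set \<Rightarrow> 'e set \<Rightarrow> ('v,'e) gen \<Rightarrow> bool" where
  "valid_gen E0 E1 g = (case g of V v \<Rightarrow> v \<in> E0 | Ed e \<Rightarrow> e \<in> E1 | Gh e \<Rightarrow> e \<in> E1)"

definition free_alg :: "'v set \<Rightarrow> 'e set \<Rightarrow> (('v,'e) gen list \<Rightarrow> 'a::ring_1) set" where
  "free_alg E0 E1 = {f. finite {w. f w \<noteq> 0} \<and> (\<forall>w. f w \<noteq> 0 \<longrightarrow> (\<forall>g\<in>set w. valid_gen E0 E1 g))}"

definition fmul :: "('g list \<Rightarrow> 'a::ring_1) \<Rightarrow> ('g list \<Rightarrow> 'a) \<Rightarrow> 'g list \<Rightarrow> 'a" where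
  "fmul f g = (\<lambda>w. \<Sum>i\<in>{..length w}. f (take i w) * g (drop i w))"

definition fsub :: "('g list \<Rightarrow> 'a::ring_1) \<Rightarrow> ('g list \<Rightarrow> 'a) \<Rightarrow> 'g list \<Rightarrow> 'a" where
  "fsub f g = (\<lambda>w. f w - g w)"

definition ind :: "'g list \<Rightarrow> 'g list \<Rightarrow> 'a::ring_1" where
  "ind u = (\<lambda>w. if w = u then 1 else 0)"

definition lpa_rels :: "'v set \<Rightarrow> 'e set \<Rightarrow> ('e \<Rightarrow> 'v) \<Rightarrow> ('e \<Rightarrow> 'v)
    \<Rightarrow> (('v,'e) gen list \<Rightarrow> 'a::ring_1) set" where
  "lpa_rels E0 E1 r s =
     {fsub (ind [V v, V v']) (if v = v' then ind [V v] else (\<lambda>_. 0)) | v v'. v \<in> E0 \<and> v' \<in> E0}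
   \<union> {fsub (ind [V (s \<alpha>), Ed \<alpha>]) (ind [Ed \<alpha>]) | \<alpha>. \<alpha> \<in> E1}
   \<union> {fsub (ind [Ed \<alpha>, V (r \<alpha>)]) (ind [Ed \<alpha>]) | \<alpha>. \<alpha> \<in> E1}
   \<union> {fsub (ind [V (r \<alpha>), Gh \<alpha>]) (ind [Gh \<alpha>]) | \<alpha>. \<alpha> \<in> E1}
   \<union> {fsub (ind [Gh \<alpha>, V (s \<alpha>)]) (ind [Gh \<alpha>]) | \<alpha>. \<alpha> \<in> E1}
   \<union> {fsub (ind [Gh \<alpha>, Ed \<alpha>']) (if \<alpha> = \<alpha>' then ind [V (r \<alpha>)] else (\<lambda>_. 0))
        | \<alpha> \<alpha>'. \<alpha> \<in> E1 \<and> \<alpha>' \<in> E1}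
   \<union> {fsub (\<lambda>w. \<Sum>\<alpha>\<in>{\<alpha>\<in>E1. s \<alpha> = v}. ind [Ed \<alpha>, Gh \<alpha>] w) (ind [V v])
        | v. v \<in> E0 \<and> {\<alpha>\<in>E1. s \<alpha> = v} \<noteq> {} \<and> finite {\<alpha>\<in>E1. s \<alpha> = v}}"

text \<open>Two-sided ideal of the free algebra generated by the relations;
  L_R(E) is the quotient of the free algebra by it.\<close>
inductive_set lpa_ideal :: "'v set \<Rightarrow> 'e set \<Rightarrow> ('e \<Rightarrow> 'v) \<Rightarrow> ('e \<Rightarrow> 'v)
    \<Rightarrow> (('v,'e) gen list \<Rightarrow> 'a::ring_1) set"
  for E0 E1 r s where
  rel: "f \<in> lpa_rels E0 E1 r s \<Longrightarrow> f \<in> lpa_ideal E0 E1 r s"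
| zero: "(\<lambda>_. 0) \<in> lpa_ideal E0 E1 r s"
| add: "f \<in> lpa_ideal E0 E1 r s \<Longrightarrow> g \<in> lpa_ideal E0 E1 r s
        \<Longrightarrow> (\<lambda>w. f w + g w) \<in> lpa_ideal E0 E1 r s"
| mult: "f \<in> lpa_ideal E0 E1 r s \<Longrightarrow> a \<in> free_alg E0 E1 \<Longrightarrow> b \<in> free_alg E0 E1
        \<Longrightarrow> fmul (fmul a f) b \<in> lpa_ideal E0 E1 r s"

text \<open>Paths: (v, es), with v the source; es = [] is the vertex v as a path of length 0.\<close>
definition is_path :: "'v set \<Rightarrow> 'e set \<Rightarrow> ('e \<Rightarrow> 'v) \<Rightarrow> ('e \<Rightarrow> 'v) \<Rightarrow> 'v \<times> 'e list \<Rightarrow> bool" where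
  "is_path E0 E1 r s p = (case p of (v, es) \<Rightarrow> v \<in> E0 \<and> set es \<subseteq> E1 \<and>
      (es \<noteq> [] \<longrightarrow> s (hd es) = v) \<and>
      (\<forall>k. Suc k < length es \<longrightarrow> r (es ! k) = s (es ! Suc k)))"

definition path_range :: "('e \<Rightarrow> 'v) \<Rightarrow> 'v \<times> 'e list \<Rightarrow> 'v" where
  "path_range r p = (case p of (v, es) \<Rightarrow> if es = [] then v else r (last es))"

definition path_word :: "'v \<times> 'e list \<Rightarrow> ('v,'e) gen list" where
  "path_word p = (case p of (v, es) \<Rightarrow> if es = [] then [V v] else map Ed es)"

definition ghost_word :: "'v \<times> 'e list \<Rightarrow> ('v,'e) gen list" where
  "ghost_word p = (case p of (v, es) \<Rightarrow> if es = [] then [V v] else map Gh (rev es))"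

definition path_weight :: "('v \<Rightarrow> 'i S) \<Rightarrow> ('e \<Rightarrow> 'i S) \<Rightarrow> 'v \<times> 'e list \<Rightarrow> 'i S" where
  "path_weight wV wE p = (case p of (v, es) \<Rightarrow> foldl (\<lambda>acc e. smult acc (wE e)) (wV v) es)"

definition canonical_weight :: "'v set \<Rightarrow> 'e set \<Rightarrow> ('e \<Rightarrow> 'v) \<Rightarrow> ('e \<Rightarrow> 'v)
    \<Rightarrow> ('v \<Rightarrow> 'i S) \<Rightarrow> ('e \<Rightarrow> 'i S) \<Rightarrow> bool" where
  "canonical_weight E0 E1 r s wV wE =
    ((\<forall>v\<in>E0. \<exists>i. wV v = Some (i, 0, i)) \<and>
     (\<forall>\<alpha>\<in>E1. \<exists>i j. wE \<alpha> = Some (i, 1, j)) \<and>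
     (\<forall>\<alpha>\<in>E1. smult (wV (s \<alpha>)) (wE \<alpha>) = wE \<alpha> \<and> smult (wE \<alpha>) (wV (r \<alpha>)) = wE \<alpha>) \<and>
     (\<forall>f. f \<noteq> None \<and> smult f f = f \<longrightarrow>
        (\<forall>\<alpha>\<in>E1. \<forall>\<beta>\<in>E1. wV (s \<alpha>) = f \<and> wV (s \<beta>) = f \<longrightarrow> wE \<alpha> = wE \<beta>) \<and>
        (\<forall>\<alpha>\<in>E1. \<forall>\<beta>\<in>E1. wV (r \<alpha>) = f \<and> wV (r \<beta>) = f \<longrightarrow> wE \<alpha> = wE \<beta>)))"

text \<open>Representatives (in the free algebra) of the homogeneous component (L_R(E))_x:
  the R-span of the monomials mu eta^* with r(mu) = r(eta) and w(mu eta^*) = x.\<close>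
inductive_set component :: "'v set \<Rightarrow> 'e set \<Rightarrow> ('e \<Rightarrow> 'v) \<Rightarrow> ('e \<Rightarrow> 'v)
    \<Rightarrow> ('v \<Rightarrow> 'i S) \<Rightarrow> ('e \<Rightarrow> 'i S) \<Rightarrow> 'i S \<Rightarrow> (('v,'e) gen list \<Rightarrow> 'a::ring_1) set"
  for E0 E1 r s wV wE x where
  zero: "(\<lambda>_. 0) \<in> component E0 E1 r s wV wE x"
| step: "f \<in> component E0 E1 r s wV wE x \<Longrightarrow> is_path E0 E1 r s \<mu> \<Longrightarrow> is_path E0 E1 r s \<eta>
     \<Longrightarrow> path_range r \<mu> = path_range r \<eta>
     \<Longrightarrow> smult (path_weight wV wE \<mu>) (sinv (path_weight wV wE \<eta>)) = x
     \<Longrightarrow> (\<lambda>w. f w + (if w = path_word \<mu> @ ghost_word \<eta> then c else 0))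
           \<in> component E0 E1 r s wV wE x"

text \<open>Von Neumann regularity of the ring A/I-image (A a set of representatives,
  I the ideal): every a has b with a = a b a, modulo I.\<close>
definition vnr_mod :: "('g list \<Rightarrow> 'a::ring_1) set \<Rightarrow> ('g list \<Rightarrow> 'a) set \<Rightarrow> bool" where
  "vnr_mod A I = (\<forall>f\<in>A. \<exists>g\<in>A. fsub f (fmul (fmul f g) f) \<in> I)"

end

theory Submission
  imports Defs
begin

text \<open>
  \<open>L\<^sub>R(E)\<close> acts on the free \<open>R\<close>-module spanned by the maximal paths of \<open>E\<close>
  (infinite paths, and finite paths ending in a sink or an infinite emitter): a vertex projects
  onto the paths starting at it, an edge is prepended, a ghost edge deletes a matching first edge.
  The defining relations hold for this action, so for every maximal path \<open>q\<close> and every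
  \<open>H\<close> the functional \<open>F \<mapsto> H(F q)\<close> vanishes on the ideal of relations.
  Take a vertex \<open>v\<close>, whose weight \<open>(i,0,i)\<close> is a nonzero idempotent, and a maximal path
  \<open>q\<close> from \<open>v\<close>. Regularity of the component of \<open>(i,0,i)\<close> gives \<open>g\<close> with
  \<open>a v - (a v) g (a v)\<close> in the ideal; reading off the coefficient of \<open>q\<close> in its action
  on \<open>q\<close> yields \<open>a = a b a\<close>, where \<open>b\<close> is the coefficient of \<open>q\<close> in \<open>g q\<close>. This needs no
  commutativity of \<open>R\<close>: a word maps a path to a path or to 0, so the coefficients it contributes
  are 0 or 1 and commute with \<open>a\<close>.
\<close>

definition supp :: "('g list \<Rightarrow> 'a::ring_1) \<Rightarrow> 'g list set" where
  "supp F = {w. F w \<noteq> 0}"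

definition pairing :: "('g list \<Rightarrow> 'a) \<Rightarrow> ('g list \<Rightarrow> 'a::ring_1) \<Rightarrow> 'a" where
  "pairing P F = (\<Sum>w\<in>supp F. P w * F w)"

lemma finite_supp_ind [simp]: "finite (supp (ind u :: 'g list \<Rightarrow> 'a::ring_1))"
  by (rule finite_subset[of _ "{u}"]) (auto simp: supp_def ind_def)

lemma supp_zero [simp]: "supp (\<lambda>_. 0 :: 'a::ring_1) = {}"
  by (simp add: supp_def)

lemma finite_supp_fsub [simp]:
  "finite (supp F) \<Longrightarrow> finite (supp G) \<Longrightarrow> finite (supp (fsub F G))"
  by (rule finite_subset[of _ "supp F \<union> supp G"]) (auto simp: supp_def fsub_def)

lemma finite_supp_add:
  "finite (supp F) \<Longrightarrow> finite (supp G) \<Longrightarrow> finite (supp (\<lambda>w. F w + G w))"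
  by (rule finite_subset[of _ "supp F \<union> supp G"]) (auto simp: supp_def)

lemma finite_supp_sum:
  assumes "finite A" "\<And>a. a \<in> A \<Longrightarrow> finite (supp (F a))"
  shows "finite (supp (\<lambda>w. \<Sum>a\<in>A. F a w))"
proof (rule finite_subset)
  show "supp (\<lambda>w. \<Sum>a\<in>A. F a w) \<subseteq> (\<Union>a\<in>A. supp (F a))"
    by (auto simp: supp_def dest: sum.not_neutral_contains_not_neutral)
qed (use assms in auto)

lemma supp_fmul: "supp (fmul A B) \<subseteq> (\<lambda>(u, y). u @ y) ` (supp A \<times> supp B)"
proof
  fix w assume "w \<in> supp (fmul A B)"
  then have "(\<Sum>i\<in>{..length w}. A (take i w) * B (drop i w)) \<noteq> 0"
    by (simp add: supp_def fmul_def)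
  then obtain i where "A (take i w) * B (drop i w) \<noteq> 0"
    by (meson sum.neutral)
  then have "A (take i w) \<noteq> 0" "B (drop i w) \<noteq> 0" by auto
  then show "w \<in> (\<lambda>(u, y). u @ y) ` (supp A \<times> supp B)"
    by (auto simp: supp_def image_iff) (metis append_take_drop_id)
qed

lemma finite_supp_fmul:
  "finite (supp A) \<Longrightarrow> finite (supp B) \<Longrightarrow> finite (supp (fmul A B))"
  by (rule finite_subset[OF supp_fmul]) auto

lemma fmul_eq_sum_factorizations:
  "fmul A B w = (\<Sum>p\<in>{p\<in>supp A \<times> supp B. fst p @ snd p = w}. A (fst p) * B (snd p))"
proof -
  have "fmul A B w = (\<Sum>i\<in>{i\<in>{..length w}. A (take i w) \<noteq> 0 \<and> B (drop i w) \<noteq> 0}.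
                        A (take i w) * B (drop i w))"
    unfolding fmul_def by (rule sum.mono_neutral_right) auto
  also have "\<dots> = (\<Sum>p\<in>{p\<in>supp A \<times> supp B. fst p @ snd p = w}. A (fst p) * B (snd p))"
    by (rule sum.reindex_bij_witness[where i="\<lambda>p. length (fst p)" and j="\<lambda>i. (take i w, drop i w)"])
       (auto simp: supp_def)
  finally show ?thesis .
qed

lemma pairing_superset:
  assumes "finite S" "supp F \<subseteq> S"
  shows "pairing P F = (\<Sum>w\<in>S. P w * F w)"
  unfolding pairing_def
  by (rule sum.mono_neutral_left) (use assms in \<open>auto simp: supp_def\<close>)

lemma pairing_zero_left [simp]: "pairing (\<lambda>_. 0) F = 0"
  by (simp add: pairing_def)

lemma pairing_zero_right [simp]: "pairing P (\<lambda>_. 0) = 0"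
  by (simp add: pairing_def)

lemma pairing_single: "pairing P (\<lambda>w. if w = u then c else 0) = P u * c"
  by (subst pairing_superset[of "{u}"]) (auto simp: supp_def)

lemma pairing_ind [simp]: "pairing P (ind u) = P u"
  unfolding ind_def by (simp add: pairing_single)

lemma pairing_add:
  assumes "finite (supp F)" "finite (supp G)"
  shows "pairing P (\<lambda>w. F w + G w) = pairing P F + pairing P G"
proof -
  let ?S = "supp F \<union> supp G"
  have S: "finite ?S" using assms by simp
  have "pairing P (\<lambda>w. F w + G w) = (\<Sum>w\<in>?S. P w * (F w + G w))"
    by (rule pairing_superset[OF S]) (auto simp: supp_def)
  also have "\<dots> = (\<Sum>w\<in>?S. P w * F w) + (\<Sum>w\<in>?S. P w * G w)"
    by (simp add: distrib_left sum.distrib)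
  also have "\<dots> = pairing P F + pairing P G"
    by (simp add: pairing_superset[OF S])
  finally show ?thesis .
qed

lemma pairing_fsub:
  assumes "finite (supp F)" "finite (supp G)"
  shows "pairing P (fsub F G) = pairing P F - pairing P G"
proof -
  let ?S = "supp F \<union> supp G"
  have S: "finite ?S" using assms by simp
  have "pairing P (fsub F G) = (\<Sum>w\<in>?S. P w * (F w - G w))"
    unfolding fsub_def by (rule pairing_superset[OF S]) (auto simp: supp_def)
  also have "\<dots> = (\<Sum>w\<in>?S. P w * F w) - (\<Sum>w\<in>?S. P w * G w)"
    by (simp add: right_diff_distrib sum_subtractf)
  also have "\<dots> = pairing P F - pairing P G"
    by (simp add: pairing_superset[OF S])
  finally show ?thesis .
qed

lemma pairing_sum:
  assumes A: "finite A" and F: "\<And>a. a \<in> A \<Longrightarrow> finite (supp (F a))"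
  shows "pairing P (\<lambda>w. \<Sum>a\<in>A. F a w) = (\<Sum>a\<in>A. pairing P (F a))"
proof -
  let ?S = "\<Union>a\<in>A. supp (F a)"
  have S: "finite ?S" using A F by simp
  have "pairing P (\<lambda>w. \<Sum>a\<in>A. F a w) = (\<Sum>w\<in>?S. \<Sum>a\<in>A. P w * F a w)"
    by (subst pairing_superset[OF S])
       (auto simp: supp_def sum_distrib_left dest: sum.not_neutral_contains_not_neutral)
  also have "\<dots> = (\<Sum>a\<in>A. pairing P (F a))"
    by (subst sum.swap) (use A in \<open>auto intro!: sum.cong pairing_superset[symmetric] S\<close>)
  finally show ?thesis .
qed

lemma pairing_fmul:
  assumes fA: "finite (supp A)" and fB: "finite (supp B)"
  shows "pairing P (fmul A B) = pairing (\<lambda>y. pairing (\<lambda>u. P (u @ y)) A) B"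
proof -
  let ?P = "supp A \<times> supp B"
  let ?c = "\<lambda>p. fst p @ snd p"
  have fP: "finite ?P" using fA fB by auto
  have "pairing P (fmul A B) = (\<Sum>w\<in>?c ` ?P. P w * fmul A B w)"
    by (rule pairing_superset) (use fP supp_fmul[of A B] in \<open>auto simp: case_prod_beta\<close>)
  also have "\<dots> = (\<Sum>w\<in>?c ` ?P. \<Sum>p\<in>{p\<in>?P. ?c p = w}. P (?c p) * A (fst p) * B (snd p))"
    by (auto simp: fmul_eq_sum_factorizations sum_distrib_left mult.assoc intro!: sum.cong)
  also have "\<dots> = (\<Sum>p\<in>?P. P (?c p) * A (fst p) * B (snd p))"
    by (rule sum.group) (use fP in auto)
  also have "\<dots> = (\<Sum>u\<in>supp A. \<Sum>y\<in>supp B. P (u @ y) * A u * B y)"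
    by (simp add: sum.cartesian_product case_prod_beta)
  also have "\<dots> = (\<Sum>y\<in>supp B. \<Sum>u\<in>supp A. P (u @ y) * A u * B y)"
    by (rule sum.swap)
  also have "\<dots> = pairing (\<lambda>y. pairing (\<lambda>u. P (u @ y)) A) B"
    by (simp add: pairing_def sum_distrib_right)
  finally show ?thesis .
qed

type_synonym ('v, 'e) state = "'v \<times> (nat \<Rightarrow> 'e option)"

definition regular_vertex :: "'e set \<Rightarrow> ('e \<Rightarrow> 'v) \<Rightarrow> 'v \<Rightarrow> bool" where
  "regular_vertex E1 s v \<longleftrightarrow> {\<alpha>\<in>E1. s \<alpha> = v} \<noteq> {} \<and> finite {\<alpha>\<in>E1. s \<alpha> = v}"

text \<open>\<open>(v, p)\<close> is the path from \<open>v\<close> with edges \<open>p 0, p 1, \<dots>\<close>; \<open>p n = None\<close> ends a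
  finite path, which is allowed only at a singular vertex (entries after it are irrelevant).\<close>

coinductive max_path :: "'e set \<Rightarrow> ('e \<Rightarrow> 'v) \<Rightarrow> ('e \<Rightarrow> 'v) \<Rightarrow> ('v, 'e) state \<Rightarrow> bool"
  for E1 r s where
  edge: "\<alpha> \<in> E1 \<Longrightarrow> s \<alpha> = v \<Longrightarrow> p 0 = Some \<alpha> \<Longrightarrow> max_path E1 r s (r \<alpha>, \<lambda>n. p (Suc n))
         \<Longrightarrow> max_path E1 r s (v, p)"
| stop: "\<not> regular_vertex E1 s v \<Longrightarrow> p 0 = None \<Longrightarrow> max_path E1 r s (v, p)"

lemma max_path_first_edge: "max_path E1 r s (v, p) \<Longrightarrow> p 0 = Some \<alpha> \<Longrightarrow> \<alpha> \<in> E1 \<and> s \<alpha> = v"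
  by (erule max_path.cases) auto

lemma max_path_regular_edge:
  "max_path E1 r s (v, p) \<Longrightarrow> regular_vertex E1 s v \<Longrightarrow> \<exists>\<alpha>. p 0 = Some \<alpha>"
  by (erule max_path.cases) auto

lemma max_path_exists: "\<exists>p. max_path E1 r s (v, p)"
proof -
  define next_edge where
    "next_edge u = (if regular_vertex E1 s u then Some (SOME \<alpha>. \<alpha> \<in> E1 \<and> s \<alpha> = u) else None)" for u
  define step where "step u = (case next_edge u of Some \<alpha> \<Rightarrow> r \<alpha> | None \<Rightarrow> u)" for u
  define path where "path u = (\<lambda>n. next_edge ((step ^^ n) u))" for u
  have path_Suc: "(\<lambda>n. path u (Suc n)) = path (step u)" for u
    by (simp add: path_def funpow_swap1)
  have "max_path E1 r s (u, path u)" for u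
  proof (coinduction arbitrary: u rule: max_path.coinduct)
    case max_path
    show ?case
    proof (cases "regular_vertex E1 s u")
      case True
      then have "\<exists>\<alpha>. \<alpha> \<in> E1 \<and> s \<alpha> = u" by (auto simp: regular_vertex_def)
      then have "(SOME \<alpha>. \<alpha> \<in> E1 \<and> s \<alpha> = u) \<in> E1 \<and> s (SOME \<alpha>. \<alpha> \<in> E1 \<and> s \<alpha> = u) = u"
        by (rule someI_ex)
      then show ?thesis
        using True path_Suc[of u] by (auto simp: path_def next_edge_def step_def)
    next
      case False
      then show ?thesis by (simp add: path_def next_edge_def)
    qed
  qed
  then show ?thesis by blast
qed

fun gen_act :: "'e set \<Rightarrow> ('e \<Rightarrow> 'v) \<Rightarrow> ('e \<Rightarrow> 'v) \<Rightarrow> ('v, 'e) gen \<Rightarrow> ('v, 'e) state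
    \<Rightarrow> ('v, 'e) state option" where
  "gen_act E1 r s (V u) (v, p) = (if u = v then Some (v, p) else None)"
| "gen_act E1 r s (Ed \<alpha>) (v, p) =
     (if \<alpha> \<in> E1 \<and> r \<alpha> = v then Some (s \<alpha>, case_nat (Some \<alpha>) p) else None)"
| "gen_act E1 r s (Gh \<alpha>) (v, p) = (if p 0 = Some \<alpha> then Some (r \<alpha>, \<lambda>n. p (Suc n)) else None)"

text \<open>A word acts from its last letter to its first, so \<open>u @ y\<close> acts as \<open>u\<close> after \<open>y\<close>.\<close>

fun word_act :: "'e set \<Rightarrow> ('e \<Rightarrow> 'v) \<Rightarrow> ('e \<Rightarrow> 'v) \<Rightarrow> ('v, 'e) gen list \<Rightarrow> ('v, 'e) state
    \<Rightarrow> ('v, 'e) state option" where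
  "word_act E1 r s [] q = Some q"
| "word_act E1 r s (g # w) q = Option.bind (word_act E1 r s w q) (gen_act E1 r s g)"

lemma word_act_append:
  "word_act E1 r s (u @ y) q = Option.bind (word_act E1 r s y q) (word_act E1 r s u)"
  by (induction u) auto

lemma max_path_gen_act:
  assumes "max_path E1 r s q" "gen_act E1 r s g q = Some q'"
  shows "max_path E1 r s q'"
proof -
  obtain v p where q: "q = (v, p)" by fastforce
  show ?thesis
  proof (cases g)
    case (Ed \<alpha>)
    then show ?thesis
      using assms unfolding q by (auto split: if_splits intro: max_path.edge)
  next
    case (Gh \<alpha>)
    then show ?thesis
      using assms unfolding q by (auto split: if_splits elim: max_path.cases)
  qed (use assms q in \<open>auto split: if_splits\<close>)
qed

lemma max_path_word_act:
  "max_path E1 r s q \<Longrightarrow> word_act E1 r s w q = Some q' \<Longrightarrow> max_path E1 r s q'"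
  by (induction w arbitrary: q') (auto simp: bind_eq_Some_conv intro: max_path_gen_act)

text \<open>\<open>pairing (act_eval E1 r s q H) F\<close> is \<open>H\<close>, extended linearly, applied to \<open>F q\<close>.\<close>

definition act_eval :: "'e set \<Rightarrow> ('e \<Rightarrow> 'v) \<Rightarrow> ('e \<Rightarrow> 'v) \<Rightarrow> ('v, 'e) state
    \<Rightarrow> (('v, 'e) state \<Rightarrow> 'a::ring_1) \<Rightarrow> ('v, 'e) gen list \<Rightarrow> 'a" where
  "act_eval E1 r s q H w = (case word_act E1 r s w q of None \<Rightarrow> 0 | Some p \<Rightarrow> H p)"

lemma act_eval_append:
  "act_eval E1 r s q H (u @ y) =
     (case word_act E1 r s y q of None \<Rightarrow> 0 | Some p \<Rightarrow> act_eval E1 r s p H u)"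
  by (simp add: act_eval_def word_act_append split: option.split)

lemma act_eval_zero [simp]: "act_eval E1 r s q (\<lambda>_. 0) = (\<lambda>_. 0)"
  by (simp add: act_eval_def fun_eq_iff split: option.split)

lemma act_eval_cong:
  assumes "max_path E1 r s q" "\<And>p. max_path E1 r s p \<Longrightarrow> H p = H' p"
  shows "act_eval E1 r s q H w = act_eval E1 r s q H' w"
  using assms max_path_word_act[OF assms(1)] by (simp add: act_eval_def split: option.split)

lemma pairing_act_eval_fmul:
  assumes "finite (supp A)" "finite (supp B)"
  shows "pairing (act_eval E1 r s q H) (fmul A B) =
         pairing (act_eval E1 r s q (\<lambda>p. pairing (act_eval E1 r s p H) A)) B"
proof -
  have "pairing (\<lambda>u. act_eval E1 r s q H (u @ y)) A =
        act_eval E1 r s q (\<lambda>p. pairing (act_eval E1 r s p H) A) y" for y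
    by (cases "word_act E1 r s y q")
       (simp_all add: act_eval_append, simp_all add: act_eval_def[of E1 r s q])
  then show ?thesis by (simp add: pairing_fmul[OF assms])
qed

definition vanishes_on_max_paths :: "'e set \<Rightarrow> ('e \<Rightarrow> 'v) \<Rightarrow> ('e \<Rightarrow> 'v)
    \<Rightarrow> (('v, 'e) gen list \<Rightarrow> 'a::ring_1) \<Rightarrow> bool" where
  "vanishes_on_max_paths E1 r s F \<longleftrightarrow>
     (\<forall>q H. max_path E1 r s q \<longrightarrow> pairing (act_eval E1 r s q H) F = 0)"

lemma vanishes_on_max_paths_add:
  assumes "finite (supp F)" "finite (supp G)"
    and "vanishes_on_max_paths E1 r s F" "vanishes_on_max_paths E1 r s G"
  shows "vanishes_on_max_paths E1 r s (\<lambda>w. F w + G w)"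
  using assms by (simp add: vanishes_on_max_paths_def pairing_add)

lemma vanishes_on_max_paths_fmul:
  fixes F :: "('v, 'e) gen list \<Rightarrow> 'a::ring_1"
  assumes A: "finite (supp A)" and F: "finite (supp F)" and B: "finite (supp B)"
    and vanish: "vanishes_on_max_paths E1 r s F"
  shows "vanishes_on_max_paths E1 r s (fmul (fmul A F) B)"
  unfolding vanishes_on_max_paths_def
proof (intro allI impI)
  fix q and H :: "('v, 'e) state \<Rightarrow> 'a"
  assume q: "max_path E1 r s q"
  have AF_vanishes: "pairing (act_eval E1 r s p H) (fmul A F) = 0" if "max_path E1 r s p" for p
    using vanish that unfolding pairing_act_eval_fmul[OF A F] vanishes_on_max_paths_def by blast
  have "act_eval E1 r s q (\<lambda>p. pairing (act_eval E1 r s p H) (fmul A F)) =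
        act_eval E1 r s q (\<lambda>_. 0)"
    by (intro ext act_eval_cong[OF q] AF_vanishes)
  then show "pairing (act_eval E1 r s q H) (fmul (fmul A F) B) = 0"
    by (simp add: pairing_act_eval_fmul[OF finite_supp_fmul[OF A F] B])
qed

lemma vanishes_on_max_paths_fsub_ind:
  assumes "\<And>v p. max_path E1 r s (v, p) \<Longrightarrow> word_act E1 r s w1 (v, p) = word_act E1 r s w2 (v, p)"
  shows "vanishes_on_max_paths E1 r s (fsub (ind w1) (ind w2) :: ('v, 'e) gen list \<Rightarrow> 'a::ring_1)"
  using assms by (auto simp: vanishes_on_max_paths_def pairing_fsub act_eval_def)

lemma vanishes_on_max_paths_ind:
  assumes "\<And>v p. max_path E1 r s (v, p) \<Longrightarrow> word_act E1 r s w (v, p) = None"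
  shows "vanishes_on_max_paths E1 r s (fsub (ind w) (\<lambda>_. 0) :: ('v, 'e) gen list \<Rightarrow> 'a::ring_1)"
  using assms by (auto simp: vanishes_on_max_paths_def pairing_fsub act_eval_def)

lemma word_act_edge_ghost:
  assumes "max_path E1 r s (v, p)"
  shows "word_act E1 r s [Ed \<alpha>, Gh \<alpha>] (v, p) = (if p 0 = Some \<alpha> then Some (v, p) else None)"
proof -
  have "case_nat (Some \<alpha>) (\<lambda>n. p (Suc n)) = p" if "p 0 = Some \<alpha>"
    using that by (auto split: nat.split)
  then show ?thesis using max_path_first_edge[OF assms] by auto
qed

lemma vanishes_on_max_paths_cuntz_krieger:
  assumes reg: "regular_vertex E1 s v"
  shows "vanishes_on_max_paths E1 r s
     (fsub (\<lambda>w. \<Sum>\<alpha>\<in>{\<alpha>\<in>E1. s \<alpha> = v}. ind [Ed \<alpha>, Gh \<alpha>] w) (ind [V v])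
        :: ('v, 'e) gen list \<Rightarrow> 'a::ring_1)"
  unfolding vanishes_on_max_paths_def
proof (intro allI impI)
  fix q :: "('v, 'e) state" and H :: "('v, 'e) state \<Rightarrow> 'a"
  obtain u p where q_def: "q = (u, p)" by fastforce
  assume "max_path E1 r s q"
  then have q: "max_path E1 r s (u, p)" by (simp add: q_def)
  let ?A = "{\<alpha>\<in>E1. s \<alpha> = v}"
  have fin: "finite ?A" using reg by (simp add: regular_vertex_def)
  have edge_ghost:
    "act_eval E1 r s (u, p) H [Ed \<alpha>, Gh \<alpha>] = (if p 0 = Some \<alpha> then H (u, p) else 0)" for \<alpha>
    unfolding act_eval_def word_act_edge_ghost[OF q] by simp
  have "(\<Sum>\<alpha>\<in>?A. act_eval E1 r s (u, p) H [Ed \<alpha>, Gh \<alpha>]) = (if u = v then H (u, p) else 0)"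
  proof (cases "u = v")
    case True
    then obtain \<beta> where \<beta>: "p 0 = Some \<beta>"
      using max_path_regular_edge[OF q] reg by blast
    then have "\<beta> \<in> ?A" using max_path_first_edge[OF q] True by blast
    then show ?thesis unfolding edge_ghost using True fin by (simp add: \<beta> sum.delta)
  next
    case False
    have "p 0 \<noteq> Some \<alpha>" if "\<alpha> \<in> ?A" for \<alpha>
      using max_path_first_edge[OF q, of \<alpha>] that False by auto
    then show ?thesis unfolding edge_ghost using False by simp
  qed
  then show "pairing (act_eval E1 r s q H)
      (fsub (\<lambda>w. \<Sum>\<alpha>\<in>?A. ind [Ed \<alpha>, Gh \<alpha>] w) (ind [V v])) = 0"
    using fin by (simp add: pairing_fsub pairing_sum finite_supp_sum q_def
        act_eval_def[of _ _ _ _ _ "[V v]"])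
qed

lemma vanishes_on_max_paths_lpa_rels:
  assumes "F \<in> lpa_rels E0 E1 r s"
  shows "vanishes_on_max_paths E1 r s F"
  using assms unfolding lpa_rels_def
proof (elim UnE CollectE exE conjE)
  fix v v' assume "F = fsub (ind [V v, V v']) (if v = v' then ind [V v] else (\<lambda>_. 0))"
  then show ?thesis
    by (cases "v = v'") (auto intro!: vanishes_on_max_paths_fsub_ind vanishes_on_max_paths_ind)
next
  fix \<alpha> assume "F = fsub (ind [Gh \<alpha>, V (s \<alpha>)]) (ind [Gh \<alpha>])"
  then show ?thesis
    by (auto intro!: vanishes_on_max_paths_fsub_ind dest: max_path_first_edge)
next
  fix \<alpha> \<alpha>' assume "F = fsub (ind [Gh \<alpha>, Ed \<alpha>']) (if \<alpha> = \<alpha>' then ind [V (r \<alpha>)] else (\<lambda>_. 0))"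
    and "\<alpha> \<in> E1"
  then show ?thesis
    by (cases "\<alpha> = \<alpha>'") (auto intro!: vanishes_on_max_paths_fsub_ind vanishes_on_max_paths_ind)
next
  fix v assume "F = fsub (\<lambda>w. \<Sum>\<alpha>\<in>{\<alpha>\<in>E1. s \<alpha> = v}. ind [Ed \<alpha>, Gh \<alpha>] w) (ind [V v])"
    and "{\<alpha>\<in>E1. s \<alpha> = v} \<noteq> {}" "finite {\<alpha>\<in>E1. s \<alpha> = v}"
  then show ?thesis
    by (simp add: vanishes_on_max_paths_cuntz_krieger regular_vertex_def)
qed (auto intro!: vanishes_on_max_paths_fsub_ind)

lemma finite_supp_lpa_rels: "F \<in> lpa_rels E0 E1 r s \<Longrightarrow> finite (supp F)"
  unfolding lpa_rels_def by (auto intro!: finite_supp_fsub finite_supp_sum)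

lemma finite_supp_lpa_ideal: "F \<in> lpa_ideal E0 E1 r s \<Longrightarrow> finite (supp F)"
proof (induction rule: lpa_ideal.induct)
  case (mult f a b)
  then have "finite (supp a)" "finite (supp b)"
    by (auto simp: free_alg_def supp_def)
  then show ?case using mult.IH by (simp add: finite_supp_fmul)
qed (auto simp: finite_supp_lpa_rels finite_supp_add)

lemma vanishes_on_max_paths_lpa_ideal:
  "F \<in> lpa_ideal E0 E1 r s \<Longrightarrow> vanishes_on_max_paths E1 r s F"
proof (induction rule: lpa_ideal.induct)
  case (add f g)
  then show ?case by (simp add: vanishes_on_max_paths_add finite_supp_lpa_ideal)
next
  case (mult f a b)
  then have "finite (supp a)" "finite (supp b)"
    by (auto simp: free_alg_def supp_def)
  then show ?case
    using mult by (simp add: vanishes_on_max_paths_fmul finite_supp_lpa_ideal)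
qed (simp_all add: vanishes_on_max_paths_lpa_rels vanishes_on_max_paths_def[of _ _ _ "\<lambda>_. 0"])

lemma finite_supp_component: "F \<in> component E0 E1 r s wV wE x \<Longrightarrow> finite (supp F)"
proof (induction rule: component.induct)
  case (step f \<mu> \<eta> c)
  show ?case
    by (rule finite_subset[of _ "insert (path_word \<mu> @ ghost_word \<eta>) (supp f)"])
       (use step in \<open>auto simp: supp_def\<close>)
qed simp

lemma vertex_in_component:
  assumes "v \<in> E0" "wV v = Some (i, 0, i)"
  shows "(\<lambda>w. if w = [V v, V v] then c else 0) \<in> component E0 E1 r s wV wE (Some (i, 0, i))"
proof -
  have "(\<lambda>w. 0 + (if w = path_word (v, []) @ ghost_word (v, []) then c else 0))
          \<in> component E0 E1 r s wV wE (Some (i, 0, i))"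
    by (rule component.step[OF component.zero])
       (use assms in \<open>auto simp: is_path_def path_weight_def\<close>)
  then show ?thesis by (simp add: path_word_def ghost_word_def)
qed

lemma pairing_vertex_sandwich:
  fixes G :: "('v, 'e) gen list \<Rightarrow> 'a::ring_1" and a :: 'a
    and E1 :: "'e set" and r s :: "'e \<Rightarrow> 'v" and v :: 'v and p :: "nat \<Rightarrow> 'e option"
  assumes G: "finite (supp G)"
  defines "F \<equiv> \<lambda>w. if w = [V v, V v] then a else 0"
    and "P \<equiv> act_eval E1 r s (v, p) (\<lambda>q. of_bool (q = (v, p)))"
  shows "pairing P (fsub F (fmul (fmul F G) F)) = a - a * pairing P G * a"
proof -
  have F: "finite (supp F)" by (auto simp: F_def supp_def)
  have pairing_F: "pairing Q F = Q [V v, V v] * a" for Q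
    by (simp add: F_def pairing_single)
  have P_vv: "P (V v # V v # x @ [V v, V v]) = P x" for x
    by (cases "word_act E1 r s x (v, p)")
       (auto simp: P_def act_eval_def word_act_append split: if_splits)
  have P_central: "P x * a = a * P x" for x
    by (simp add: P_def act_eval_def split: option.split)
  have "pairing P (fmul (fmul F G) F) = pairing (\<lambda>x. P x * a) G * a"
    by (simp add: pairing_fmul finite_supp_fmul F G pairing_F P_vv)
  also have "\<dots> = a * pairing P G * a"
    by (simp add: pairing_def P_central sum_distrib_left mult.assoc)
  finally have "pairing P (fmul (fmul F G) F) = a * pairing P G * a" .
  moreover have "pairing P F = a"
    by (simp add: pairing_F P_def act_eval_def)
  ultimately show ?thesis
    by (simp add: pairing_fsub finite_supp_fmul F G)
qed

theorem lemma5p11: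
  fixes E0 :: "'v set" and E1 :: "'e set" and r s :: "'e \<Rightarrow> 'v"
    and wV :: "'v \<Rightarrow> 'i S" and wE :: "'e \<Rightarrow> 'i S"
  assumes graph: "\<forall>\<alpha>\<in>E1. s \<alpha> \<in> E0 \<and> r \<alpha> \<in> E0"
    and not_null: "E0 \<noteq> {}"
    and canon: "canonical_weight E0 E1 r s wV wE"
    and reg: "\<forall>x. x \<noteq> None \<and> smult x x = x \<longrightarrow>
       vnr_mod (component E0 E1 r s wV wE x :: (('v,'e) gen list \<Rightarrow> 'a::ring_1) set)
               (lpa_ideal E0 E1 r s)"
  shows "\<forall>a::'a. \<exists>b. a = a * b * a"
proof
  fix a :: 'a
  obtain v where v: "v \<in> E0" using not_null by blast
  have "\<forall>v\<in>E0. \<exists>i. wV v = Some (i, 0, i)"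
    using canon unfolding canonical_weight_def by (elim conjE)
  then obtain i where wv: "wV v = Some (i, 0, i)" using v by blast
  have regular_component: "vnr_mod (component E0 E1 r s wV wE (Some (i, 0, i)))
      (lpa_ideal E0 E1 r s :: (('v, 'e) gen list \<Rightarrow> 'a) set)"
    using reg by simp
  define F :: "('v, 'e) gen list \<Rightarrow> 'a" where "F = (\<lambda>w. if w = [V v, V v] then a else 0)"
  have "F \<in> component E0 E1 r s wV wE (Some (i, 0, i))"
    unfolding F_def using v wv by (rule vertex_in_component)
  then obtain G where G: "G \<in> component E0 E1 r s wV wE (Some (i, 0, i))"
    and FGF: "fsub F (fmul (fmul F G) F) \<in> lpa_ideal E0 E1 r s"
    using regular_component unfolding vnr_mod_def by blast
  obtain p where p: "max_path E1 r s (v, p)" using max_path_exists[of E1 r s v] by blast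
  define P :: "('v, 'e) gen list \<Rightarrow> 'a" where
    "P = act_eval E1 r s (v, p) (\<lambda>q. of_bool (q = (v, p)))"
  have "pairing P (fsub F (fmul (fmul F G) F)) = 0"
    using vanishes_on_max_paths_lpa_ideal[OF FGF] p unfolding vanishes_on_max_paths_def P_def by blast
  then have "a = a * pairing P G * a"
    unfolding F_def P_def pairing_vertex_sandwich[OF finite_supp_component[OF G]] by simp
  then show "\<exists>b. a = a * b * a" ..
qed

end
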